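(* Let $k\ge 2$ be a constant integer. There is a constant $C>0$ such that for all integers $1\le j\le n$ and all positive integers $q$ the following holds: letting $x$ be the vertex born in round $j$ of the random $k$-tree process, conditional on any realization of $G(j)$, the probability that $x$ has degree greater than $k+q(n/j)^{(k-1)/k}$ in $G(n)$ is at most $C\,q\sqrt{q}\,e^{-q}$.
   Context: Random $k$-tree process: $G(0)$ is a clique on $k$ vertices; for $t\ge1$, $G(t)$ is obtained from $G(t-1)$ by choosing a $k$-clique of $G(t-1)$ uniformly at random, creating a new vertex (said to be born in round $t$), and joining it to all vertices of the chosen clique. *)

theory Defs
  imports "HOL-Probability.Probability"
begin

text \<open>The initial clique G(0) has vertices 0..k-1; the vertex born in round t (t \<ge> 1)
  is the vertex k + t - 1, so G(t) has vertex set {..<k+t}.\<close>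

definition ktree_init :: "nat \<Rightarrow> nat set set" where
  "ktree_init k = {{u, v} | u v. u < k \<and> v < k \<and> u \<noteq> v}"

definition kcliques :: "nat \<Rightarrow> nat set \<Rightarrow> nat set set \<Rightarrow> nat set set" where
  "kcliques k V E = {S. S \<subseteq> V \<and> card S = k \<and> (\<forall>u\<in>S. \<forall>v\<in>S. u \<noteq> v \<longrightarrow> {u, v} \<in> E)}"

definition ktree_step :: "nat \<Rightarrow> nat \<Rightarrow> nat set set \<Rightarrow> nat set set pmf" where
  "ktree_step k t E =
     map_pmf (\<lambda>S. E \<union> {{v, k + t} | v. v \<in> S}) (pmf_of_set (kcliques k {..<k + t} E))"

text \<open>Evolution of the process from state H = G(j) for m further rounds: distribution of G(j+m)
  conditional on G(j) = H.\<close>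
primrec ktree_evolve :: "nat \<Rightarrow> nat \<Rightarrow> nat \<Rightarrow> nat set set \<Rightarrow> nat set set pmf" where
  "ktree_evolve k j 0 H = return_pmf H"
| "ktree_evolve k j (Suc m) H = bind_pmf (ktree_evolve k j m H) (ktree_step k (j + m))"

definition ktree_process :: "nat \<Rightarrow> nat \<Rightarrow> nat set set pmf" where
  "ktree_process k t = ktree_evolve k 0 t (ktree_init k)"

definition degree :: "nat set set \<Rightarrow> nat \<Rightarrow> nat" where
  "degree E x = card {v. {v, x} \<in> E \<and> v \<noteq> x}"

end

theory Submission
  imports Defs
begin

text \<open>For a vertex x of degree d put Z = d - k + k/(k-1). Every k-clique of G(t) containing x
  is split into k-1 new cliques containing x exactly when it is chosen, so x lies in (k-1)Z of the
  1 + kt cliques of G(t). Hence in each round Z grows by one with probability (k-1)Z/(1+kt), and the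
  rising factorial Z^(q) grows in expectation by the factor 1 + q(k-1)/(1+kt); over the rounds
  j+1, ..., n these factors multiply to at most (n/j)^(q(k-1)/k) once q(k-1)/k \<ge> 1. Since Z = k/(k-1)
  \<le> 2 at birth, the expectation of Z^(q) in G(n) is at most (q+1)! (n/j)^(q(k-1)/k), and Markov's
  inequality combined with the Stirling-type bound q! \<le> e q^(q+1/2) e^(-q) gives the tail bound.\<close>

section \<open>Analytic inequalities\<close>

lemma ln_one_plus_mult_le:
  fixes a y :: real
  assumes a: "a \<ge> 1" and y: "y \<ge> 0"
  shows "ln (1 + a * y) \<le> a * ln (1 + y)"
proof -
  let ?g = "\<lambda>z. a * ln (1 + z) - ln (1 + a * z)"
  have "?g 0 \<le> ?g y"
  proof (rule DERIV_nonneg_imp_nondecreasing[OF y])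
    fix z :: real assume z: "0 \<le> z" "z \<le> y"
    have p1: "1 + z > 0" and p2: "1 + a * z > 0" using z a by (auto intro: add_pos_nonneg)
    have "DERIV ?g z :> a * (1 / (1 + z)) - a / (1 + a * z)"
      by (rule derivative_eq_intros refl | use p1 p2 in simp)+
    moreover have "1 + z \<le> 1 + a * z"
      using z a by (simp add: mult_right_mono[of 1 a z, simplified])
    then have "1 / (1 + a * z) \<le> 1 / (1 + z)"
      using p1 by (simp add: frac_le)
    then have "a * (1 / (1 + z)) - a / (1 + a * z) \<ge> 0"
      using a by (simp add: divide_inverse mult_left_mono)
    ultimately show "\<exists>D. DERIV ?g z :> D \<and> 0 \<le> D" by blast
  qed
  then show ?thesis by simp
qed

lemma Bernoulli_inequality_powr:
  fixes a y :: real
  assumes "a \<ge> 1" and "y \<ge> 0"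
  shows "1 + a * y \<le> (1 + y) powr a"
proof -
  have "1 + a * y = exp (ln (1 + a * y))"
    using assms by (simp add: add_pos_nonneg)
  also have "\<dots> \<le> exp (a * ln (1 + y))"
    using ln_one_plus_mult_le[OF assms] by simp
  also have "\<dots> = (1 + y) powr a"
    using assms by (simp add: powr_def add_pos_nonneg)
  finally show ?thesis .
qed

lemma prod_one_plus_div_le_powr:
  fixes a :: real and j :: nat
  assumes a: "a \<ge> 1" and j: "j > 0"
  shows "(\<Prod>i<m. 1 + a / real (j + i)) \<le> (real (j + m) / real j) powr a"
proof (induction m)
  case 0
  then show ?case using j by simp
next
  case (Suc m)
  let ?t = "real (j + m)"
  have t: "?t > 0" and "real j > 0" using j by simp_all
  have shift: "T / real j * (1 + 1 / T) = (T + 1) / real j" if "T > 0" for T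
    using that \<open>real j > 0\<close> by (simp add: field_simps)
  have "(\<Prod>i<Suc m. 1 + a / real (j + i)) = (\<Prod>i<m. 1 + a / real (j + i)) * (1 + a * (1 / ?t))"
    by simp
  also have "\<dots> \<le> (?t / real j) powr a * (1 + 1 / ?t) powr a"
    using Suc.IH Bernoulli_inequality_powr[OF a, of "1 / ?t"] a t
    by (intro mult_mono) (auto intro: add_nonneg_nonneg)
  also have "\<dots> = (?t / real j * (1 + 1 / ?t)) powr a"
    by (rule powr_mult[symmetric])
  also have "?t / real j * (1 + 1 / ?t) = real (j + Suc m) / real j"
    using shift[OF t] by (simp add: add_ac)
  finally show ?case .
qed

lemma ln_one_plus_ge:
  fixes x :: real
  assumes x: "x \<ge> 0"
  shows "2 * x / (2 + x) \<le> ln (1 + x)"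
proof -
  let ?g = "\<lambda>z. ln (1 + z) - 2 * z / (2 + z)"
  have "?g 0 \<le> ?g x"
  proof (rule DERIV_nonneg_imp_nondecreasing[OF x])
    fix z :: real assume z: "0 \<le> z" "z \<le> x"
    have p1: "1 + z > 0" and p2: "2 + z > 0" using z by auto
    have "DERIV ?g z :> 1 / (1 + z) - (2 * (2 + z) - 2 * z) / (2 + z)^2"
      by (rule derivative_eq_intros refl | use p1 p2 in \<open>simp add: power2_eq_square\<close>)+
    moreover have "1 / (1 + z) - (2 * (2 + z) - 2 * z) / (2 + z)^2 = z^2 / ((1 + z) * (2 + z)^2)"
    proof -
      have "1 / (1 + z) - (2 * (2 + z) - 2 * z) / (2 + z)^2 = ((2 + z)^2 - 4 * (1 + z)) / ((1 + z) * (2 + z)^2)"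
        using p1 p2 by (simp add: field_simps)
      also have "(2 + z)^2 - 4 * (1 + z) = z^2"
        by (simp add: power2_eq_square algebra_simps)
      finally show ?thesis .
    qed
    moreover have "z^2 / ((1 + z) * (2 + z)^2) \<ge> 0" using p1 p2 by simp
    ultimately show "\<exists>D. DERIV ?g z :> D \<and> 0 \<le> D" by metis
  qed
  then show ?thesis by simp
qed

lemma exp_one_le_one_plus_inverse_powr:
  fixes x :: real
  assumes x: "x \<ge> 1"
  shows "exp 1 * x powr (x + 1/2) \<le> (x + 1) powr (x + 1/2)"
proof -
  have "1 \<le> (x + 1/2) * (2 * (1 / x) / (2 + 1 / x))"
    using x by (simp add: field_simps)
  also have "\<dots> \<le> (x + 1/2) * ln (1 + 1 / x)"
    using ln_one_plus_ge[of "1 / x"] x by (intro mult_left_mono) auto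
  also have "ln (1 + 1 / x) = ln (x + 1) - ln x"
    using x ln_div[of "x + 1" x] by (simp add: field_simps)
  finally have "1 + (x + 1/2) * ln x \<le> (x + 1/2) * ln (x + 1)"
    by (simp add: algebra_simps)
  then have "exp (1 + (x + 1/2) * ln x) \<le> exp ((x + 1/2) * ln (x + 1))"
    by simp
  then show ?thesis
    using x by (simp add: powr_def exp_add mult_ac)
qed

lemma fact_mult_exp_le:
  assumes "q \<ge> 1"
  shows "fact q * exp (real q) \<le> exp 1 * real q powr (real q + 1/2)"
  using assms
proof (induction q rule: dec_induct)
  case base
  then show ?case by simp
next
  case (step q)
  have "fact (Suc q) * exp (real (Suc q)) = (real q + 1) * exp 1 * (fact q * exp (real q))"
    by (simp add: exp_add[symmetric] algebra_simps)
  also have "\<dots> \<le> (real q + 1) * exp 1 * (exp 1 * real q powr (real q + 1/2))"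
    using step.IH by (intro mult_left_mono) auto
  also have "\<dots> \<le> (real q + 1) * exp 1 * (real q + 1) powr (real q + 1/2)"
    using exp_one_le_one_plus_inverse_powr[of "real q"] step.hyps by (intro mult_left_mono) auto
  also have "\<dots> = exp 1 * real (Suc q) powr (real (Suc q) + 1/2)"
    using powr_add[of "real (Suc q)" 1 "real q + 1/2"] by (simp add: add_ac)
  finally show ?case .
qed

lemma fact_Suc_div_power_le:
  assumes q: "q \<ge> 1"
  shows "fact (Suc q) / real q ^ q \<le> 2 * exp 1 * real q * sqrt (real q) * exp (- real q)"
proof -
  have qp: "real q > 0" using q by simp
  have "real q powr (real q + 1/2) = real q ^ q * sqrt (real q)"
    using qp by (simp add: powr_add powr_realpow powr_half_sqrt)
  then have f: "fact q \<le> exp 1 * (real q ^ q * sqrt (real q)) * exp (- real q)"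
    using fact_mult_exp_le[OF q] by (simp add: exp_minus field_simps)
  have "fact (Suc q) = (real q + 1) * fact q" by simp
  also have "\<dots> \<le> (2 * real q) * (exp 1 * (real q ^ q * sqrt (real q)) * exp (- real q))"
    using f q by (intro mult_mono) auto
  finally show ?thesis
    using qp by (simp add: divide_le_eq mult_ac)
qed

lemma power_le_pochhammer:
  fixes z :: "'a :: linordered_semidom"
  assumes "z \<ge> 0"
  shows "z ^ n \<le> pochhammer z n"
  unfolding pochhammer_prod using assms prod_mono[of "{0..<n}" "\<lambda>_. z"] by simp

lemma pochhammer_mono:
  fixes z w :: "'a :: linordered_semidom"
  assumes "0 \<le> z" "z \<le> w"
  shows "pochhammer z n \<le> pochhammer w n"
  unfolding pochhammer_prod using assms by (intro prod_mono) auto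

lemma pochhammer_two_eq_fact: "pochhammer (2 :: 'a :: {comm_semiring_1, semiring_char_0}) n = fact (Suc n)"
  by (simp add: pochhammer_fact pochhammer_rec one_add_one)

section \<open>One round of the process\<close>

definition join_edges :: "nat \<Rightarrow> nat set \<Rightarrow> nat set set" where
  "join_edges w S = {{v, w} | v. v \<in> S}"

lemma ktree_step_eq_map_pmf:
  "ktree_step k t E = map_pmf (\<lambda>S. E \<union> join_edges (k + t) S) (pmf_of_set (kcliques k {..<k + t} E))"
  by (simp add: ktree_step_def join_edges_def)

lemma finite_kcliques: "finite (kcliques k {..<m} E)"
  by (rule finite_subset[of _ "Pow {..<m}"]) (auto simp: kcliques_def)

definition clique_count :: "nat \<Rightarrow> nat \<Rightarrow> nat \<Rightarrow> nat set set \<Rightarrow> nat" where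
  "clique_count k t x E = card {S \<in> kcliques k {..<k + t} E. x \<in> S}"

context
  fixes k t :: nat and E :: "nat set set" and S :: "nat set"
  assumes k: "k \<ge> 1"
    and edges: "\<forall>e\<in>E. e \<subseteq> {..<k + t}"
    and S: "S \<in> kcliques k {..<k + t} E"
begin

private lemma S_subset: "S \<subseteq> {..<k + t}"
  and card_S: "card S = k"
  and finite_S: "finite S"
  and S_clique: "\<And>u v. u \<in> S \<Longrightarrow> v \<in> S \<Longrightarrow> u \<noteq> v \<Longrightarrow> {u, v} \<in> E"
  using S k by (auto simp: kcliques_def intro: card_ge_0_finite)

private lemma new_edge_notin: "{u, k + t} \<notin> E"
  using edges by fastforce

private lemma new_edge_iff: "u \<noteq> k + t \<Longrightarrow> {u, k + t} \<in> join_edges (k + t) S \<longleftrightarrow> u \<in> S"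
  by (auto simp: join_edges_def doubleton_eq_iff)

lemma edges_join: "\<forall>e\<in>E \<union> join_edges (k + t) S. e \<subseteq> {..<k + Suc t}"
  using edges S_subset by (fastforce simp: join_edges_def)

lemma kcliques_join:
  "kcliques k {..<k + Suc t} (E \<union> join_edges (k + t) S)
     = kcliques k {..<k + t} E \<union> (\<lambda>u. insert (k + t) (S - {u})) ` S"
proof (intro equalityI subsetI)
  let ?w = "k + t"
  fix T assume T: "T \<in> kcliques k {..<k + Suc t} (E \<union> join_edges ?w S)"
  then have TV: "T \<subseteq> insert ?w {..<k + t}" and card_T: "card T = k"
    and T_clique: "\<And>u v. u \<in> T \<Longrightarrow> v \<in> T \<Longrightarrow> u \<noteq> v \<Longrightarrow> {u, v} \<in> E \<union> join_edges ?w S"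
    by (auto simp: kcliques_def)
  show "T \<in> kcliques k {..<k + t} E \<union> (\<lambda>u. insert ?w (S - {u})) ` S"
  proof (cases "?w \<in> T")
    case False
    then have "T \<subseteq> {..<k + t}" using TV by auto
    moreover have "{u, v} \<in> E" if "u \<in> T" "v \<in> T" "u \<noteq> v" for u v
      using T_clique[OF that] that \<open>T \<subseteq> {..<k + t}\<close> by (auto simp: join_edges_def doubleton_eq_iff)
    ultimately show ?thesis using card_T by (auto simp: kcliques_def)
  next
    case True
    have sub: "T - {?w} \<subseteq> S"
    proof
      fix u assume u: "u \<in> T - {?w}"
      then have "{u, ?w} \<in> E \<union> join_edges ?w S" using T_clique True by auto
      then show "u \<in> S" using new_edge_notin new_edge_iff u by auto
    qed
    have "card (T - {?w}) = k - 1"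
      using True card_T k by (simp add: card_ge_0_finite)
    then have "card (S - (T - {?w})) = 1"
      using card_Diff_subset[OF finite_subset[OF sub finite_S] sub] card_S k by simp
    then obtain u where u: "S - (T - {?w}) = {u}" by (auto simp: card_Suc_eq)
    then have "T = insert ?w (S - {u})" using sub True by blast
    then show ?thesis using u by blast
  qed
next
  let ?w = "k + t"
  fix T assume "T \<in> kcliques k {..<k + t} E \<union> (\<lambda>u. insert ?w (S - {u})) ` S"
  then show "T \<in> kcliques k {..<k + Suc t} (E \<union> join_edges ?w S)"
  proof
    assume "T \<in> (\<lambda>u. insert ?w (S - {u})) ` S"
    then obtain u where u: "u \<in> S" and T: "T = insert ?w (S - {u})" by auto
    have "?w \<notin> S" using S_subset by auto
    then have "card T = k" using T u finite_S card_S k by (simp add: card_Diff_singleton)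
    moreover have "T \<subseteq> {..<k + Suc t}" using T S_subset by auto
    moreover have "{a, b} \<in> E \<union> join_edges ?w S" if "a \<in> T" "b \<in> T" "a \<noteq> b" for a b
      using that T S_clique new_edge_iff[of a] new_edge_iff[of b] by (auto simp: insert_commute)
    ultimately show ?thesis by (simp add: kcliques_def)
  qed (auto simp: kcliques_def)
qed

private lemma inj_on_replace: "inj_on (\<lambda>u. insert (k + t) (S - {u})) S"
proof
  fix u v assume "u \<in> S" "v \<in> S" "insert (k + t) (S - {u}) = insert (k + t) (S - {v})"
  moreover have "k + t \<notin> S" using S_subset by auto
  ultimately have "S - {u} = S - {v}" by (metis Diff_insert_absorb Diff_subset subsetD)
  then show "u = v" using \<open>u \<in> S\<close> \<open>v \<in> S\<close> by blast
qed

private lemma old_kcliques_disjoint: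
  "kcliques k {..<k + t} E \<inter> (\<lambda>u. insert (k + t) (S - {u})) ` A = {}"
  by (auto simp: kcliques_def)

lemma card_kcliques_join:
  "card (kcliques k {..<k + Suc t} (E \<union> join_edges (k + t) S)) = card (kcliques k {..<k + t} E) + k"
  unfolding kcliques_join using old_kcliques_disjoint card_image[OF inj_on_replace] card_S
    finite_kcliques finite_S by (simp add: card_Un_disjoint)

lemma clique_count_join:
  assumes x: "x < k + t"
  shows "clique_count k (Suc t) x (E \<union> join_edges (k + t) S)
           = clique_count k t x E + (if x \<in> S then k - 1 else 0)"
proof -
  let ?f = "\<lambda>u. insert (k + t) (S - {u})"
  let ?A = "if x \<in> S then S - {x} else {}"
  have "{T \<in> kcliques k {..<k + Suc t} (E \<union> join_edges (k + t) S). x \<in> T}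
        = {T \<in> kcliques k {..<k + t} E. x \<in> T} \<union> ?f ` ?A"
    unfolding kcliques_join using x by auto
  moreover have "card (?f ` ?A) = (if x \<in> S then k - 1 else 0)"
    using card_image[OF inj_on_subset[OF inj_on_replace]] card_S finite_S by auto
  moreover have "{T \<in> kcliques k {..<k + t} E. x \<in> T} \<inter> ?f ` ?A = {}"
    using old_kcliques_disjoint by auto
  ultimately show ?thesis
    unfolding clique_count_def using finite_kcliques finite_S by (simp add: card_Un_disjoint)
qed

lemma clique_count_join_new: "clique_count k (Suc t) (k + t) (E \<union> join_edges (k + t) S) = k"
proof -
  have "{T \<in> kcliques k {..<k + Suc t} (E \<union> join_edges (k + t) S). k + t \<in> T}
        = (\<lambda>u. insert (k + t) (S - {u})) ` S"
    unfolding kcliques_join by (auto simp: kcliques_def)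
  then show ?thesis
    unfolding clique_count_def using card_image[OF inj_on_replace] card_S by simp
qed

lemma degree_join:
  assumes x: "x < k + t"
  shows "degree (E \<union> join_edges (k + t) S) x = degree E x + (if x \<in> S then 1 else 0)"
proof -
  have "{v. {v, x} \<in> E \<union> join_edges (k + t) S \<and> v \<noteq> x}
        = {v. {v, x} \<in> E \<and> v \<noteq> x} \<union> (if x \<in> S then {k + t} else {})"
    using x by (auto simp: join_edges_def doubleton_eq_iff)
  moreover have "k + t \<notin> {v. {v, x} \<in> E \<and> v \<noteq> x}"
    using new_edge_notin by (auto simp: insert_commute)
  moreover have "finite {v. {v, x} \<in> E \<and> v \<noteq> x}"
    by (rule finite_subset[of _ "{..<k + t}"]) (use edges in auto)
  ultimately show ?thesis unfolding degree_def by auto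
qed

lemma degree_join_new: "degree (E \<union> join_edges (k + t) S) (k + t) = k"
proof -
  have "{v. {v, k + t} \<in> E \<union> join_edges (k + t) S \<and> v \<noteq> k + t} = S"
    using new_edge_notin S_subset by (auto simp: join_edges_def doubleton_eq_iff)
  then show ?thesis using card_S by (simp add: degree_def)
qed

end

section \<open>Invariants of the process\<close>

definition ktree_inv :: "nat \<Rightarrow> nat \<Rightarrow> nat set set \<Rightarrow> bool" where
  "ktree_inv k t E \<longleftrightarrow> (\<forall>e\<in>E. e \<subseteq> {..<k + t}) \<and> card (kcliques k {..<k + t} E) = 1 + k * t"

lemma ktree_inv_init: "ktree_inv k 0 (ktree_init k)"
proof -
  have "kcliques k {..<k} (ktree_init k) = {{..<k}}"
  proof (intro equalityI subsetI)
    fix S assume "S \<in> kcliques k {..<k} (ktree_init k)"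
    then show "S \<in> {{..<k}}" using card_subset_eq[of "{..<k}" S] by (auto simp: kcliques_def)
  qed (auto simp: kcliques_def ktree_init_def)
  then show ?thesis by (auto simp: ktree_inv_def ktree_init_def)
qed

lemma set_pmf_ktree_step:
  assumes "ktree_inv k t E"
  shows "set_pmf (ktree_step k t E) = (\<lambda>S. E \<union> join_edges (k + t) S) ` kcliques k {..<k + t} E"
proof -
  have "kcliques k {..<k + t} E \<noteq> {}" using assms by (auto simp: ktree_inv_def)
  then show ?thesis by (simp add: ktree_step_eq_map_pmf finite_kcliques)
qed

lemma ktree_inv_step:
  assumes "k \<ge> 1" "ktree_inv k t E" "E' \<in> set_pmf (ktree_step k t E)"
  shows "ktree_inv k (Suc t) E'"
proof -
  obtain S where S: "S \<in> kcliques k {..<k + t} E" and E': "E' = E \<union> join_edges (k + t) S"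
    using assms(2,3) set_pmf_ktree_step by auto
  have edges: "\<forall>e\<in>E. e \<subseteq> {..<k + t}" using assms(2) by (simp add: ktree_inv_def)
  show ?thesis
    using edges_join[OF assms(1) edges S] card_kcliques_join[OF assms(1) edges S] assms(2) E'
    by (simp add: ktree_inv_def)
qed

lemma ktree_inv_evolve:
  assumes "k \<ge> 1" "ktree_inv k j H"
  shows "E \<in> set_pmf (ktree_evolve k j m H) \<Longrightarrow> ktree_inv k (j + m) E"
proof (induction m arbitrary: E)
  case 0
  then show ?case using assms by simp
next
  case (Suc m)
  then show ?case using ktree_inv_step[OF assms(1)] by fastforce
qed

lemma finite_set_pmf_ktree_evolve:
  assumes "k \<ge> 1" "ktree_inv k j H"
  shows "finite (set_pmf (ktree_evolve k j m H))"
proof (induction m)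
  case (Suc m)
  have "finite (set_pmf (ktree_step k (j + m) E))" if "E \<in> set_pmf (ktree_evolve k j m H)" for E
    using ktree_inv_evolve[OF assms that] set_pmf_ktree_step finite_kcliques by simp
  then show ?case using Suc.IH by simp
qed simp

definition shifted_degree :: "nat \<Rightarrow> nat \<Rightarrow> nat set set \<Rightarrow> real" where
  "shifted_degree k x E = real (degree E x) - real k + real k / (real k - 1)"

definition clique_degree_law :: "nat \<Rightarrow> nat \<Rightarrow> nat \<Rightarrow> nat set set \<Rightarrow> bool" where
  "clique_degree_law k t x E \<longleftrightarrow> real (clique_count k t x E) = (real k - 1) * shifted_degree k x E"

lemma shifted_degree_join:
  assumes "k \<ge> 1" "\<forall>e\<in>E. e \<subseteq> {..<k + t}" "S \<in> kcliques k {..<k + t} E" "x < k + t"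
  shows "shifted_degree k x (E \<union> join_edges (k + t) S) = shifted_degree k x E + (if x \<in> S then 1 else 0)"
  using degree_join[OF assms] by (simp add: shifted_degree_def)

lemma clique_degree_law_join:
  assumes "k \<ge> 1" "\<forall>e\<in>E. e \<subseteq> {..<k + t}" "S \<in> kcliques k {..<k + t} E" "x < k + t"
    and "clique_degree_law k t x E"
  shows "clique_degree_law k (Suc t) x (E \<union> join_edges (k + t) S)"
  using assms(5) clique_count_join[OF assms(1-4)] shifted_degree_join[OF assms(1-4)] assms(1)
  by (auto simp: clique_degree_law_def of_nat_diff algebra_simps)

lemma newborn_vertex:
  assumes k: "k \<ge> 2" and j: "j \<ge> 1" and H: "H \<in> set_pmf (ktree_process k j)"
  shows "ktree_inv k j H \<and> clique_degree_law k j (k + j - 1) H \<and> degree H (k + j - 1) = k"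
proof -
  obtain t where t: "j = Suc t" using j by (cases j) auto
  from H obtain E where E: "E \<in> set_pmf (ktree_evolve k 0 t (ktree_init k))"
    and H': "H \<in> set_pmf (ktree_step k t E)" by (auto simp: ktree_process_def t)
  have inv: "ktree_inv k t E" using ktree_inv_evolve[OF _ ktree_inv_init E] k by simp
  then obtain S where S: "S \<in> kcliques k {..<k + t} E" and HS: "H = E \<union> join_edges (k + t) S"
    using H' set_pmf_ktree_step by auto
  have edges: "\<forall>e\<in>E. e \<subseteq> {..<k + t}" using inv by (simp add: ktree_inv_def)
  have "(real k - 1) * (real k / (real k - 1)) = real k" using k by simp
  then show ?thesis
    using ktree_inv_step[OF _ inv H'] clique_count_join_new[OF _ edges S] degree_join_new[OF _ edges S]
      HS t k by (simp add: clique_degree_law_def shifted_degree_def)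
qed

lemma clique_degree_law_evolve:
  assumes k: "k \<ge> 1" and inv: "ktree_inv k j H" and law: "clique_degree_law k j x H" and x: "x < k + j"
  shows "E \<in> set_pmf (ktree_evolve k j m H) \<Longrightarrow> clique_degree_law k (j + m) x E"
proof (induction m arbitrary: E)
  case 0
  then show ?case using law by simp
next
  case (Suc m)
  then obtain E0 where E0: "E0 \<in> set_pmf (ktree_evolve k j m H)"
    and E: "E \<in> set_pmf (ktree_step k (j + m) E0)" by auto
  have inv0: "ktree_inv k (j + m) E0" using ktree_inv_evolve[OF k inv E0] .
  then obtain S where S: "S \<in> kcliques k {..<k + (j + m)} E0"
    and ES: "E = E0 \<union> join_edges (k + (j + m)) S"
    using E set_pmf_ktree_step by auto
  show ?case
    using clique_degree_law_join[OF k _ S _ Suc.IH[OF E0]] inv0 x ES by (simp add: ktree_inv_def)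
qed

section \<open>Moments of the shifted degree\<close>

lemma expectation_ktree_step:
  assumes k: "k \<ge> 2" and inv: "ktree_inv k t E" and law: "clique_degree_law k t x E" and x: "x < k + t"
  shows "measure_pmf.expectation (ktree_step k t E) (\<lambda>E'. pochhammer (shifted_degree k x E') q)
           = pochhammer (shifted_degree k x E) q * (1 + real q * (real k - 1) / (1 + real k * real t))"
proof -
  let ?C = "kcliques k {..<k + t} E"
  define Z where "Z = shifted_degree k x E"
  have edges: "\<forall>e\<in>E. e \<subseteq> {..<k + t}" and card_C: "card ?C = 1 + k * t"
    using inv by (auto simp: ktree_inv_def)
  have C: "?C \<noteq> {}" "finite ?C" using card_C finite_kcliques by auto
  have W: "real (clique_count k t x E) = (real k - 1) * Z"
    using law by (simp add: Z_def clique_degree_law_def)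
  have "real (clique_count k t x E) * (pochhammer (Z + 1) q - pochhammer Z q)
        = (real k - 1) * (Z * pochhammer (Z + 1) q - Z * pochhammer Z q)"
    unfolding W by (simp add: algebra_simps)
  also have "Z * pochhammer (Z + 1) q = pochhammer Z q * (Z + real q)"
    by (metis pochhammer_rec pochhammer_Suc)
  finally have gain: "real (clique_count k t x E) * (pochhammer (Z + 1) q - pochhammer Z q)
                      = (real k - 1) * real q * pochhammer Z q"
    by (simp add: algebra_simps)
  have "measure_pmf.expectation (ktree_step k t E) (\<lambda>E'. pochhammer (shifted_degree k x E') q)
        = (\<Sum>S\<in>?C. pochhammer (shifted_degree k x (E \<union> join_edges (k + t) S)) q) / card ?C"
    using C by (simp add: ktree_step_eq_map_pmf integral_pmf_of_set)
  also have "(\<Sum>S\<in>?C. pochhammer (shifted_degree k x (E \<union> join_edges (k + t) S)) q)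
             = (\<Sum>S\<in>?C. pochhammer Z q + (if x \<in> S then pochhammer (Z + 1) q - pochhammer Z q else 0))"
    using shifted_degree_join[OF _ edges _ x] k by (intro sum.cong) (auto simp: Z_def)
  also have "\<dots> = card ?C * pochhammer Z q
                   + real (clique_count k t x E) * (pochhammer (Z + 1) q - pochhammer Z q)"
    using C by (simp add: sum.distrib sum.inter_filter[symmetric] clique_count_def)
  finally show ?thesis
    unfolding gain using card_C add_pos_nonneg[of 1 "real k * real t"] by (simp add: Z_def field_simps)
qed

lemma expectation_ktree_evolve:
  assumes k: "k \<ge> 2" and inv: "ktree_inv k j H" and law: "clique_degree_law k j x H" and x: "x < k + j"
  shows "measure_pmf.expectation (ktree_evolve k j m H) (\<lambda>E. pochhammer (shifted_degree k x E) q)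
           = pochhammer (shifted_degree k x H) q
             * (\<Prod>i<m. 1 + real q * (real k - 1) / (1 + real k * real (j + i)))"
proof (induction m)
  case 0
  then show ?case by simp
next
  case (Suc m)
  let ?M = "ktree_evolve k j m H"
  let ?\<Phi> = "\<lambda>E. pochhammer (shifted_degree k x E) q"
  let ?c = "1 + real q * (real k - 1) / (1 + real k * real (j + m))"
  have k1: "k \<ge> 1" using k by simp
  have fin: "finite (set_pmf ?M)" using finite_set_pmf_ktree_evolve[OF k1 inv] .
  have "measure_pmf.expectation (ktree_evolve k j (Suc m) H) ?\<Phi>
        = (\<Sum>E\<in>set_pmf ?M. pmf ?M E *\<^sub>R measure_pmf.expectation (ktree_step k (j + m) E) ?\<Phi>)"
    unfolding ktree_evolve.simps
    by (rule pmf_expectation_bind[OF fin])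
       (use ktree_inv_evolve[OF k1 inv] set_pmf_ktree_step finite_kcliques in auto)
  also have "\<dots> = (\<Sum>E\<in>set_pmf ?M. pmf ?M E *\<^sub>R (?\<Phi> E * ?c))"
    using expectation_ktree_step[OF k ktree_inv_evolve[OF k1 inv] clique_degree_law_evolve[OF k1 inv law x]] x
    by (intro sum.cong) auto
  also have "\<dots> = ?c * measure_pmf.expectation ?M ?\<Phi>"
    by (subst integral_measure_pmf[OF fin]) (auto simp: sum_distrib_left mult_ac)
  finally show ?case using Suc.IH by (simp add: mult_ac)
qed

lemma expectation_pochhammer_degree_le:
  assumes k: "k \<ge> 2" and q: "q \<ge> 2" and j: "1 \<le> j" "j \<le> n"
    and H: "H \<in> set_pmf (ktree_process k j)"
  shows "measure_pmf.expectation (ktree_evolve k j (n - j) H)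
           (\<lambda>E. pochhammer (shifted_degree k (k + j - 1) E) q)
         \<le> fact (Suc q) * ((real n / real j) powr ((real k - 1) / real k)) ^ q"
proof -
  let ?x = "k + j - 1"
  let ?a = "real q * (real k - 1) / real k"
  have inv: "ktree_inv k j H" and law: "clique_degree_law k j ?x H" and deg: "degree H ?x = k"
    using newborn_vertex[OF k j(1) H] by auto
  have x: "?x < k + j" using j by simp
  have a: "?a \<ge> 1"
  proof -
    have "real k \<le> 2 * (real k - 1)" using k by simp
    also have "\<dots> \<le> real q * (real k - 1)" using q k by (intro mult_right_mono) auto
    finally show ?thesis using k by simp
  qed
  have "shifted_degree k ?x H = real k / (real k - 1)" using deg by (simp add: shifted_degree_def)
  moreover have "real k / (real k - 1) \<le> 2" using k by (simp add: divide_le_eq)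
  ultimately have start: "pochhammer (shifted_degree k ?x H) q \<le> fact (Suc q)"
    unfolding pochhammer_two_eq_fact[symmetric] using k by (intro pochhammer_mono) auto
  have "(\<Prod>i<n - j. 1 + real q * (real k - 1) / (1 + real k * real (j + i)))
        \<le> (\<Prod>i<n - j. 1 + ?a / real (j + i))"
  proof (intro prod_mono conjI)
    fix i
    have "real q * (real k - 1) / (1 + real k * real (j + i)) \<le> real q * (real k - 1) / (real k * real (j + i))"
      using k j by (intro divide_left_mono) (auto intro!: mult_pos_pos add_pos_nonneg)
    then show "1 + real q * (real k - 1) / (1 + real k * real (j + i)) \<le> 1 + ?a / real (j + i)"
      by simp
  qed (use k in simp)
  also have "\<dots> \<le> (real (j + (n - j)) / real j) powr ?a"
    by (rule prod_one_plus_div_le_powr[OF a]) (use j in simp)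
  also have "\<dots> = ((real n / real j) powr ((real k - 1) / real k)) ^ q"
    using j by (simp add: powr_powr powr_realpow[symmetric] mult_ac)
  finally have growth: "(\<Prod>i<n - j. 1 + real q * (real k - 1) / (1 + real k * real (j + i)))
                        \<le> ((real n / real j) powr ((real k - 1) / real k)) ^ q" .
  have "0 \<le> (\<Prod>i<n - j. 1 + real q * (real k - 1) / (1 + real k * real (j + i)))"
    using k by (intro prod_nonneg) simp
  then show ?thesis
    unfolding expectation_ktree_evolve[OF k inv law x] using start growth
    by (intro mult_mono) auto
qed

lemma degree_tail_le:
  assumes k: "k \<ge> 2" and q: "q \<ge> 2" and j: "1 \<le> j" "j \<le> n"
    and H: "H \<in> set_pmf (ktree_process k j)"
  shows "measure_pmf.prob (ktree_evolve k j (n - j) H)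
           {E. real (degree E (k + j - 1)) > real k + real q * (real n / real j) powr ((real k - 1) / real k)}
         \<le> fact (Suc q) / real q ^ q"
proof -
  let ?x = "k + j - 1"
  let ?M = "ktree_evolve k j (n - j) H"
  let ?\<Phi> = "\<lambda>E. pochhammer (shifted_degree k ?x E) q"
  define A where "A = (real n / real j) powr ((real k - 1) / real k)"
  have A: "A > 0" using j unfolding A_def by simp
  have k1: "k \<ge> 1" using k by simp
  have inv: "ktree_inv k j H" and law: "clique_degree_law k j ?x H"
    using newborn_vertex[OF k j(1) H] by auto
  have nonneg: "0 \<le> ?\<Phi> E" if "E \<in> set_pmf ?M" for E
  proof -
    have "real (clique_count k (j + (n - j)) ?x E) = (real k - 1) * shifted_degree k ?x E"
      using clique_degree_law_evolve[OF k1 inv law _ that] j by (simp add: clique_degree_law_def)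
    then have "0 \<le> (real k - 1) * shifted_degree k ?x E"
      by (metis of_nat_0_le_iff)
    then have "0 \<le> shifted_degree k ?x E"
      using k by (simp add: zero_le_mult_iff)
    then show ?thesis using power_le_pochhammer zero_le_power order_trans by metis
  qed
  have event: "{E. real (degree E ?x) > real k + real q * A} \<subseteq> {E. (real q * A) ^ q \<le> ?\<Phi> E}"
  proof safe
    fix E assume "real (degree E ?x) > real k + real q * A"
    moreover have "0 \<le> real k / (real k - 1)" using k by simp
    ultimately have "real q * A \<le> shifted_degree k ?x E"
      by (simp add: shifted_degree_def)
    then show "(real q * A) ^ q \<le> ?\<Phi> E"
      using A power_mono power_le_pochhammer order_trans
      by (metis mult_nonneg_nonneg of_nat_0_le_iff less_imp_le)
  qed
  have "measure_pmf.prob ?M {E. real (degree E ?x) > real k + real q * A}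
        \<le> measure_pmf.prob ?M {E. (real q * A) ^ q \<le> ?\<Phi> E}"
    using event by (rule measure_pmf.finite_measure_mono) simp
  also have "\<dots> \<le> measure_pmf.expectation ?M ?\<Phi> / (real q * A) ^ q"
    using integral_Markov_inequality_measure[of ?M ?\<Phi> UNIV "(real q * A) ^ q"]
      finite_set_pmf_ktree_evolve[OF k1 inv] nonneg A q
    by (simp add: integrable_measure_pmf_finite AE_pmfI)
  also have "\<dots> \<le> fact (Suc q) * A ^ q / (real q * A) ^ q"
    using expectation_pochhammer_degree_le[OF k q j H] A q unfolding A_def
    by (intro divide_right_mono) auto
  also have "\<dots> = fact (Suc q) / real q ^ q"
    using A by (simp add: power_mult_distrib)
  finally show ?thesis unfolding A_def .
qed

theorem lemma1:
  fixes k :: nat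
  assumes "k \<ge> 2"
  shows "\<exists>C > (0::real). \<forall>j n q :: nat. 1 \<le> j \<longrightarrow> j \<le> n \<longrightarrow> 1 \<le> q \<longrightarrow>
           (\<forall>H \<in> set_pmf (ktree_process k j).
              measure_pmf.prob (ktree_evolve k j (n - j) H)
                {E. real (degree E (k + j - 1)) >
                      real k + real q * (real n / real j) powr ((real k - 1) / real k)}
              \<le> C * real q * sqrt (real q) * exp (- real q))"
proof (intro exI[of _ "2 * exp 1"] conjI allI impI ballI)
  fix j n q :: nat and H
  assume j: "1 \<le> j" and jn: "j \<le> n" and q: "1 \<le> q" and H: "H \<in> set_pmf (ktree_process k j)"
  show "measure_pmf.prob (ktree_evolve k j (n - j) H)
          {E. real (degree E (k + j - 1)) > real k + real q * (real n / real j) powr ((real k - 1) / real k)}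
        \<le> 2 * exp 1 * real q * sqrt (real q) * exp (- real q)"
  proof (cases "q = 1")
    case True
    have "1 \<le> 2 * exp 1 * real q * sqrt (real q) * exp (- real q)"
      using True by (simp add: exp_minus mult.assoc)
    then show ?thesis using measure_pmf.prob_le_1 order_trans by blast
  next
    case False
    then have "q \<ge> 2" using q by simp
    from degree_tail_le[OF assms this j jn H] fact_Suc_div_power_le[OF q]
    show ?thesis by (rule order_trans)
  qed
qed simp

end
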